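(* Let $n,s,r$ be positive integers, let $\mathbf{W}_{\mathbf{x}}\in\mathbb{R}^{n\times n}$ and $\mathbf{W}_{\boldsymbol{\xi}}\in\mathbb{R}^{s\times s}$ be diagonal matrices with positive diagonal entries, and let $t\mapsto \bm{T}(t)\in\mathbb{R}^{n\times s}$ be a given differentiable matrix-valued function of time with derivative $\dot{\bm{T}}$. For matrices $\bm{U}\in\mathbb{R}^{n\times r}$, $\bm{Y}\in\mathbb{R}^{s\times r}$ and a skew-symmetric matrix function $\boldsymbol{\phi}(t)\in\mathbb{R}^{r\times r}$, consider the evolution equations $$\dot{\bm{U}} = \left(\bm{I}-\bm{U}\bm{U}^T\mathbf{W}_{\mathbf{x}}\right)\dot{\bm{T}}\,\mathbf{W}_{\boldsymbol{\xi}}\,\bm{Y}\,\bm{C}^{-1} + \bm{U}\boldsymbol{\phi},\qquad \dot{\bm{Y}} = \dot{\bm{T}}^T\mathbf{W}_{\mathbf{x}}\bm{U} + \bm{Y}\boldsymbol{\phi},$$ where $\bm{C}=\bm{Y}^T\mathbf{W}_{\boldsymbol{\xi}}\bm{Y}\in\mathbb{R}^{r\times r}$ is assumed invertible. Suppose $\{\bm{Y},\bm{U}\}$ satisfies these equations with a skew-symmetric choice $\boldsymbol{\phi}(t)$ and $\{\widetilde{\bm{Y}},\widetilde{\bm{U}}\}$ satisfies them (with $\widetilde{\bm{C}}=\widetilde{\bm{Y}}^T\mathbf{W}_{\boldsymbol{\xi}}\widetilde{\bm{Y}}$ in place of $\bm{C}$) with a skew-symmetric choice $\widetilde{\boldsymbol{\phi}}(t)$.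 Assume the two reductions are initially equivalent, i.e. $\bm{U}(0)=\widetilde{\bm{U}}(0)\bm{R}_0$ and $\bm{Y}(0)=\widetilde{\bm{Y}}(0)\bm{R}_0$ for some orthogonal matrix $\bm{R}_0\in\mathbb{R}^{r\times r}$ ($\bm{R}_0^T\bm{R}_0=\bm{I}$). Then for $t>0$ the two reductions are equivalent, i.e. $\bm{U}(t)=\widetilde{\bm{U}}(t)\bm{R}(t)$ and $\bm{Y}(t)=\widetilde{\bm{Y}}(t)\bm{R}(t)$ with an orthogonal matrix $\bm{R}(t)\in\mathbb{R}^{r\times r}$ governed by the matrix differential equation $\dot{\bm{R}}=\bm{R}\boldsymbol{\phi}-\widetilde{\boldsymbol{\phi}}\bm{R}$, $\bm{R}(0)=\bm{R}_0$.
   Context: The columns of $\bm{T}(t)$ are (mean-subtracted) observations of a stochastic system at time $t$; $\mathbf{W}_{\mathbf{x}}=\mathrm{diag}(\mathbf{w}_{\mathbf{x}})$ are state-space weights and $\mathbf{W}_{\boldsymbol{\xi}}=\mathrm{diag}(\mathbf{w}_{\boldsymbol{\xi}})$ are sample weights. The columns of $\bm{U}$ (the dynamic basis) are orthonormal with respect to the weighted inner product $\langle \bm{u}_i,\bm{u}_j\rangle=\bm{u}_i^T\mathbf{W}_{\mathbf{x}}\bm{u}_j$, i.e. $\bm{U}^T\mathbf{W}_{\mathbf{x}}\bm{U}=\bm{I}$, and $\boldsymbol{\phi}_{ij}=\langle\bm{u}_i,\dot{\bm{u}}_j\rangle$ is skew-symmetric. Two reductions $\{\bm{Y},\bm{U}\}$,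 $\{\widetilde{\bm{Y}},\widetilde{\bm{U}}\}$ with $\bm{U},\widetilde{\bm{U}}\in\mathbb{R}^{n\times r}$, $\bm{Y},\widetilde{\bm{Y}}\in\mathbb{R}^{s\times r}$ are called equivalent if there is an orthogonal $\bm{R}\in\mathbb{R}^{r\times r}$ with $\bm{U}=\widetilde{\bm{U}}\bm{R}$ and $\bm{Y}=\widetilde{\bm{Y}}\bm{R}$. *)

theory Defs
  imports "HOL-Analysis.Analysis"
begin

definition diag_mat :: "real ^ 'n \<Rightarrow> real ^ 'n ^ 'n" where
  "diag_mat w = (\<chi> i j. if i = j then w $ i else 0)"

definition skew_symmetric :: "real ^ 'r ^ 'r \<Rightarrow> bool" where
  "skew_symmetric P \<longleftrightarrow> transpose P = - P"

end

theory Submission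
  imports Defs
begin

text \<open>Take for \<open>R\<close> the weighted least-squares coefficient of \<open>Y\<close> on \<open>Yt\<close>,
  \<open>R = (Yt\<^sup>T Wxi Yt)\<^sup>-\<^sup>1 Yt\<^sup>T Wxi Y\<close>, which is differentiable because the Gram matrix
  stays invertible. Differentiating it along the two evolution equations gives
  \<open>R' = R phi - phit R + X\<close>, where \<open>X\<close> is linear in the errors \<open>U - Ut R\<close> and \<open>Y - Yt R\<close>.
  Consequently the error triple \<open>e = (U - Ut R, Y - Yt R, R R\<^sup>T - I)\<close> satisfies
  \<open>\<parallel>e'\<parallel> \<le> c \<parallel>e\<parallel>\<close> on every compact interval \<open>[0, a]\<close>, with \<open>c\<close> bounding the continuous
  coefficients. Equivalence at time 0 means \<open>e 0 = 0\<close>, so Gronwall's argument gives \<open>e = 0\<close>,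
  whence \<open>X = 0\<close> and \<open>R\<close> solves \<open>R' = R phi - phit R\<close>.\<close>

lemma power2_norm_matrix:
  "(norm (A::real^'m^'n))\<^sup>2 = (\<Sum>i\<in>UNIV. \<Sum>j\<in>UNIV. (A$i$j)\<^sup>2)"
proof -
  have "(norm A)\<^sup>2 = (\<Sum>i\<in>UNIV. (norm (A$i))\<^sup>2)"
    unfolding norm_vec_def L2_set_def by (simp add: sum_nonneg)
  also have "\<dots> = (\<Sum>i\<in>UNIV. \<Sum>j\<in>UNIV. (A$i$j)\<^sup>2)"
    by (simp add: norm_vec_def L2_set_def sum_nonneg)
  finally show ?thesis .
qed

lemma norm_matrix_mult_le: "norm ((A::real^'k^'m) ** (B::real^'n^'k)) \<le> norm A * norm B"
proof -
  have "(norm (A ** B))\<^sup>2 = (\<Sum>i\<in>UNIV. \<Sum>j\<in>UNIV. (\<Sum>k\<in>UNIV. A$i$k * B$k$j)\<^sup>2)"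
    by (simp add: power2_norm_matrix matrix_matrix_mult_def)
  also have "\<dots> \<le> (\<Sum>i\<in>UNIV. \<Sum>j\<in>UNIV. (\<Sum>k\<in>UNIV. (A$i$k)\<^sup>2) * (\<Sum>k\<in>UNIV. (B$k$j)\<^sup>2))"
    by (intro sum_mono Cauchy_Schwarz_ineq_sum)
  also have "\<dots> = (\<Sum>i\<in>UNIV. \<Sum>k\<in>UNIV. (A$i$k)\<^sup>2) * (\<Sum>j\<in>UNIV. \<Sum>k\<in>UNIV. (B$k$j)\<^sup>2)"
    by (simp add: sum_product)
  also have "\<dots> = (norm A * norm B)\<^sup>2"
    by (simp add: power2_norm_matrix power_mult_distrib, subst (2) sum.swap, simp)
  finally show ?thesis
    by (meson mult_nonneg_nonneg norm_ge_zero power2_le_imp_le)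
qed

lemma norm_transpose [simp]: "norm (transpose (A::real^'m^'n)) = norm A"
proof -
  have "(norm (transpose A))\<^sup>2 = (norm A)\<^sup>2"
    by (simp add: power2_norm_matrix transpose_def, subst sum.swap, simp)
  then show ?thesis by simp
qed

lemma matrix_add_rdistrib: "((A::'a::semiring_1^'k^'m) + B) ** (C::'a^'n^'k) = A ** C + B ** C"
  by (vector matrix_matrix_mult_def sum.distrib[symmetric] distrib_right)

lemma matrix_diff_ldistrib: "(A::'a::ring_1^'k^'m) ** ((B::'a^'n^'k) - C) = A ** B - A ** C"
  by (vector matrix_matrix_mult_def sum_subtractf[symmetric] right_diff_distrib)

lemma matrix_diff_rdistrib: "((A::'a::ring_1^'k^'m) - B) ** (C::'a^'n^'k) = A ** C - B ** C"
  by (vector matrix_matrix_mult_def sum_subtractf[symmetric] left_diff_distrib)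

lemma matrix_minus_left: "(- (A::'a::ring_1^'k^'m)) ** (C::'a^'n^'k) = - (A ** C)"
  by (vector matrix_matrix_mult_def sum_negf[symmetric])

lemma matrix_minus_right: "(A::'a::ring_1^'k^'m) ** (- (C::'a^'n^'k)) = - (A ** C)"
  by (vector matrix_matrix_mult_def sum_negf[symmetric])

lemma transpose_add: "transpose ((A::'a::plus^'m^'n) + B) = transpose A + transpose B"
  by (vector transpose_def)

lemma transpose_diff: "transpose ((A::'a::minus^'m^'n) - B) = transpose A - transpose B"
  by (vector transpose_def)

lemma transpose_minus: "transpose (- (A::'a::uminus^'m^'n)) = - transpose A"
  by (vector transpose_def)

lemma transpose_diag_mat [simp]: "transpose (diag_mat w) = diag_mat w"
  unfolding diag_mat_def transpose_def by vector

lemmas matrix_ring_simps = matrix_add_ldistrib matrix_add_rdistrib matrix_diff_ldistrib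
  matrix_diff_rdistrib matrix_minus_left matrix_minus_right matrix_mul_assoc
  transpose_add transpose_diff transpose_minus matrix_transpose_mul

lemma bounded_bilinear_matrix_mult:
  "bounded_bilinear (\<lambda>(A::real^'k^'m) (B::real^'n^'k). A ** B)"
proof
  fix a a' :: "real^'k^'m" and b b' :: "real^'n^'k" and r :: real
  show "(a + a') ** b = a ** b + a' ** b" by (rule matrix_add_rdistrib)
  show "a ** (b + b') = a ** b + a ** b'" by (rule matrix_add_ldistrib)
  show "(r *\<^sub>R a) ** b = r *\<^sub>R (a ** b)" by (simp add: scalar_matrix_assoc)
  show "a ** (r *\<^sub>R b) = r *\<^sub>R (a ** b)" by (simp add: matrix_scalar_ac scalar_matrix_assoc)
next
  show "\<exists>K. \<forall>a b. norm ((a::real^'k^'m) ** (b::real^'n^'k)) \<le> norm a * norm b * K"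
    by (rule exI[of _ 1]) (simp add: norm_matrix_mult_le)
qed

lemma bounded_linear_transpose: "bounded_linear (transpose :: real^'m^'n \<Rightarrow> real^'n^'m)"
proof
  fix x y :: "real^'m^'n" and r :: real
  show "transpose (x + y) = transpose x + transpose y" by (rule transpose_add)
  show "transpose (r *\<^sub>R x) = r *\<^sub>R transpose x" by (rule transpose_scalar)
  show "\<exists>K. \<forall>x::real^'m^'n. norm (transpose x) \<le> norm x * K"
    by (rule exI[of _ 1]) simp
qed

lemma continuous_on_matrix_mult [continuous_intros]:
  fixes f :: "real \<Rightarrow> real^'k^'m" and g :: "real \<Rightarrow> real^'n^'k"
  shows "continuous_on S f \<Longrightarrow> continuous_on S g \<Longrightarrow> continuous_on S (\<lambda>t. f t ** g t)"
  by (rule bounded_bilinear.continuous_on[OF bounded_bilinear_matrix_mult])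

lemma continuous_on_transpose [continuous_intros]:
  fixes f :: "real \<Rightarrow> real^'m^'n"
  shows "continuous_on S f \<Longrightarrow> continuous_on S (\<lambda>t. transpose (f t))"
  by (rule bounded_linear.continuous_on[OF bounded_linear_transpose])

lemma has_vector_derivative_matrix_mult:
  fixes f :: "real \<Rightarrow> real^'k^'m" and g :: "real \<Rightarrow> real^'n^'k"
  shows "(f has_vector_derivative f') (at x within S) \<Longrightarrow> (g has_vector_derivative g') (at x within S)
    \<Longrightarrow> ((\<lambda>x. f x ** g x) has_vector_derivative (f x ** g' + f' ** g x)) (at x within S)"
  by (rule bounded_bilinear.has_vector_derivative[OF bounded_bilinear_matrix_mult])

lemma has_vector_derivative_transpose:
  fixes f :: "real \<Rightarrow> real^'m^'n"
  shows "(f has_vector_derivative f') F \<Longrightarrow> ((\<lambda>x. transpose (f x)) has_vector_derivative transpose f') F"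
  by (rule bounded_linear.has_vector_derivative[OF bounded_linear_transpose])

lemma matrix_inv_right: "invertible (A::'a::semiring_1^'n^'n) \<Longrightarrow> A ** matrix_inv A = mat 1"
  and matrix_inv_left: "invertible (A::'a::semiring_1^'n^'n) \<Longrightarrow> matrix_inv A ** A = mat 1"
  unfolding invertible_def matrix_inv_def by (metis (mono_tags, lifting) someI_ex)+

lemma norm_matrix_inv_perturbation:
  fixes B C0 C X :: "real^'r^'r"
  assumes B: "B ** C0 = mat 1" and X: "C ** X = mat 1"
    and small: "norm B * norm (C - C0) \<le> 1/2"
  shows "norm (X - B) \<le> 2 * (norm B)\<^sup>2 * norm (C - C0)"
proof -
  define D where "D = C - C0"
  have "B ** D ** X = B ** (C ** X) - B ** C0 ** X"
    by (simp add: D_def matrix_ring_simps)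
  then have XB: "X - B = - (B ** D ** X)"
    using B X by simp
  have bound: "norm (B ** D ** X) \<le> norm B * norm D * norm X"
    by (meson norm_matrix_mult_le order_trans mult_right_mono norm_ge_zero)
  also have "\<dots> \<le> 1/2 * norm X"
    using small by (intro mult_right_mono) (auto simp: D_def)
  finally have "norm X \<le> norm B + 1/2 * norm X"
    using XB norm_triangle_sub[of X B] by simp
  then have "norm X \<le> 2 * norm B" by simp
  then have "norm B * norm D * norm X \<le> norm B * norm D * (2 * norm B)"
    by (intro mult_left_mono) auto
  moreover have "norm (X - B) = norm (B ** D ** X)"
    using XB by simp
  ultimately show ?thesis
    using bound by (simp add: D_def power2_eq_square algebra_simps)
qed

lemma continuous_on_matrix_inv:
  fixes C :: "real \<Rightarrow> real^'r^'r"
  assumes cont: "continuous_on S C" and inv: "\<And>t. t \<in> S \<Longrightarrow> invertible (C t)"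
  shows "continuous_on S (\<lambda>t. matrix_inv (C t))"
  unfolding continuous_on_def
proof
  fix t0 assume t0: "t0 \<in> S"
  define B where "B = matrix_inv (C t0)"
  have lim: "((\<lambda>t. norm (C t - C t0)) \<longlongrightarrow> 0) (at t0 within S)"
    using cont t0 unfolding continuous_on_def by (simp add: tendsto_norm_zero_iff LIM_zero_iff)
  have "((\<lambda>t. norm B * norm (C t - C t0)) \<longlongrightarrow> 0) (at t0 within S)"
    using tendsto_mult_right_zero[OF lim] .
  then have "\<forall>\<^sub>F t in at t0 within S. norm B * norm (C t - C t0) < 1/2"
    by (rule order_tendstoD) simp
  then have "\<forall>\<^sub>F t in at t0 within S. norm (matrix_inv (C t) - B) \<le> 2 * (norm B)\<^sup>2 * norm (C t - C t0)"
    unfolding eventually_at_filter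
    by eventually_elim (auto intro!: norm_matrix_inv_perturbation matrix_inv_left matrix_inv_right
        inv t0 simp: B_def)
  then have "((\<lambda>t. matrix_inv (C t) - B) \<longlongrightarrow> 0) (at t0 within S)"
    by (rule Lim_null_comparison) (intro tendsto_mult_right_zero lim)
  then show "((\<lambda>t. matrix_inv (C t)) \<longlongrightarrow> matrix_inv (C t0)) (at t0 within S)"
    by (simp add: B_def LIM_zero_iff)
qed

lemma has_vector_derivative_factorization:
  fixes f :: "real \<Rightarrow> real^'a^'b" and G :: "real \<Rightarrow> real^'c^'b"
    and h :: "real \<Rightarrow> real^'d^'c" and K :: "real^'a^'d"
  assumes eq: "\<And>y. y \<in> S \<Longrightarrow> f y - f x = G y ** (h y - h x) ** K"
    and G_cont: "continuous (at x within S) G"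
    and h_deriv: "(h has_vector_derivative h') (at x within S)"
  shows "(f has_vector_derivative (G x ** h' ** K)) (at x within S)"
proof -
  define Q where "Q y = (1 / norm (y - x)) *\<^sub>R (h y - (h x + (y - x) *\<^sub>R h'))" for y
  have Q_lim: "(Q \<longlongrightarrow> 0) (at x within S)"
    using h_deriv unfolding has_vector_derivative_def has_derivative_within Q_def by simp
  have G_lim: "(G \<longlongrightarrow> G x) (at x within S)"
    using G_cont by (simp add: continuous_within)
  have "((\<lambda>y. G y ** Q y ** K) \<longlongrightarrow> G x ** 0 ** K) (at x within S)"
    by (intro bounded_bilinear.tendsto[OF bounded_bilinear_matrix_mult] G_lim Q_lim tendsto_const)
  then have lim1: "((\<lambda>y. G y ** Q y ** K) \<longlongrightarrow> 0) (at x within S)"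
    by simp
  have diff_lim: "((\<lambda>y. (G y - G x) ** h' ** K) \<longlongrightarrow> (G x - G x) ** h' ** K) (at x within S)"
    by (intro bounded_bilinear.tendsto[OF bounded_bilinear_matrix_mult] G_lim tendsto_const tendsto_diff)
  have lim2: "((\<lambda>y. (1 / norm (y - x)) *\<^sub>R ((y - x) *\<^sub>R ((G y - G x) ** h' ** K))) \<longlongrightarrow> 0)
      (at x within S)"
  proof (rule tendsto_0_le[where K=1])
    show "((\<lambda>y. (G y - G x) ** h' ** K) \<longlongrightarrow> 0) (at x within S)"
      using diff_lim by simp
  qed (simp add: always_eventually)
  have "G y ** Q y ** K + (1 / norm (y - x)) *\<^sub>R ((y - x) *\<^sub>R ((G y - G x) ** h' ** K))
     = (1 / norm (y - x)) *\<^sub>R (f y - (f x + (y - x) *\<^sub>R (G x ** h' ** K)))" if y: "y \<in> S" for y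
  proof -
    have "f y - (f x + (y - x) *\<^sub>R (G x ** h' ** K))
        = G y ** (h y - h x) ** K - (y - x) *\<^sub>R (G x ** h' ** K)"
      using eq[OF y] by (simp add: algebra_simps)
    then show ?thesis unfolding Q_def
      by (simp add: matrix_ring_simps matrix_scalar_ac scalar_matrix_assoc[symmetric]
          algebra_simps) (metis scaleR_add_right)
  qed
  then have "\<forall>\<^sub>F y in at x within S. G y ** Q y ** K + (1 / norm (y - x)) *\<^sub>R ((y - x) *\<^sub>R ((G y - G x) ** h' ** K))
     = (1 / norm (y - x)) *\<^sub>R (f y - (f x + (y - x) *\<^sub>R (G x ** h' ** K)))"
    by (auto simp: eventually_at_filter)
  with tendsto_add_zero[OF lim1 lim2]
  have "((\<lambda>y. (1 / norm (y - x)) *\<^sub>R (f y - (f x + (y - x) *\<^sub>R (G x ** h' ** K)))) \<longlongrightarrow> 0)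
      (at x within S)"
    by (rule Lim_transform_eventually)
  then show ?thesis
    unfolding has_vector_derivative_def has_derivative_within by (simp add: bounded_linear_scaleR_left)
qed

lemma has_vector_derivative_matrix_inv:
  fixes C :: "real \<Rightarrow> real^'r^'r"
  assumes inv: "\<And>t. t \<in> S \<Longrightarrow> invertible (C t)" and cont: "continuous_on S C" and x: "x \<in> S"
    and deriv: "(C has_vector_derivative C') (at x within S)"
  shows "((\<lambda>t. matrix_inv (C t)) has_vector_derivative - matrix_inv (C x) ** C' ** matrix_inv (C x))
    (at x within S)"
proof -
  have "((\<lambda>t. matrix_inv (C t)) has_vector_derivative (\<lambda>t. - matrix_inv (C t)) x ** C' ** matrix_inv (C x))
      (at x within S)"
  proof (rule has_vector_derivative_factorization[where h=C])
    fix y assume y: "y \<in> S"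
    show "matrix_inv (C y) - matrix_inv (C x) = - matrix_inv (C y) ** (C y - C x) ** matrix_inv (C x)"
      using matrix_inv_left[OF inv[OF y]] matrix_inv_right[OF inv[OF x]]
      by (simp add: matrix_ring_simps matrix_mul_assoc[symmetric])
  next
    show "continuous (at x within S) (\<lambda>t. - matrix_inv (C t))"
      using continuous_on_matrix_inv[OF cont inv] x
      by (intro continuous_intros) (simp add: continuous_on_eq_continuous_within)
  qed (rule deriv)
  then show ?thesis by simp
qed

text \<open>Gronwall's argument: \<open>exp (-2 L s) \<parallel>e s\<parallel>\<^sup>2\<close> is non-increasing.\<close>
lemma linear_derivative_bound_imp_zero:
  fixes e :: "real \<Rightarrow> 'a::real_inner"
  assumes deriv: "\<And>s. s \<in> {0..a} \<Longrightarrow> (e has_vector_derivative e' s) (at s within {0..a})"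
    and bound: "\<And>s. s \<in> {0..a} \<Longrightarrow> norm (e' s) \<le> c * norm (e s)" and e0: "e 0 = 0"
    and t: "t \<in> {0..a}"
  shows "e t = 0"
proof -
  define L where "L = \<bar>c\<bar>"
  have boundL: "norm (e' s) \<le> L * norm (e s)" if "s \<in> {0..a}" for s
    using bound[OF that] unfolding L_def by (meson abs_ge_self mult_right_mono norm_ge_zero order_trans)
  define g where "g s = exp (- (2 * L) * s) * (e s \<bullet> e s)" for s
  define g' where "g' s = exp (- (2 * L) * s) * (e s \<bullet> e' s + e' s \<bullet> e s)
    + (- (2 * L)) * exp (- (2 * L) * s) * (e s \<bullet> e s)" for s
  have g_deriv: "(g has_real_derivative g' s) (at s within {0..t})" if s: "s \<in> {0..t}" for s
  proof -
    have "((\<lambda>s. e s \<bullet> e s) has_vector_derivative (e s \<bullet> e' s + e' s \<bullet> e s)) (at s within {0..a})"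
      using s t by (intro bounded_bilinear.has_vector_derivative[OF bounded_bilinear_inner] deriv) auto
    then have "((\<lambda>s. e s \<bullet> e s) has_real_derivative (e s \<bullet> e' s + e' s \<bullet> e s)) (at s within {0..t})"
      by (simp add: has_real_derivative_iff_has_vector_derivative)
        (rule has_vector_derivative_within_subset, use t in auto)
    moreover have "((\<lambda>s. exp (- (2 * L) * s)) has_real_derivative (- (2 * L)) * exp (- (2 * L) * s))
        (at s within {0..t})"
      by (auto intro!: derivative_eq_intros)
    ultimately show ?thesis unfolding g_def g'_def
      by (auto intro!: derivative_eq_intros simp: algebra_simps)
  qed
  have t0: "0 \<le> t" using t by auto
  obtain x where x: "x \<in> {0..t}" and mvt: "g t - g 0 = g' x * t"
    using mvt_very_simple[OF t0, of g "\<lambda>s h. g' s * h"] g_deriv unfolding has_field_derivative_def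
    by (metis atLeastAtMost_iff diff_zero)
  have "e x \<bullet> e' x \<le> norm (e x) * norm (e' x)" by (rule norm_cauchy_schwarz)
  also have "\<dots> \<le> norm (e x) * (L * norm (e x))"
    using x t by (intro mult_left_mono boundL) auto
  also have "\<dots> = L * (e x \<bullet> e x)"
    by (simp add: dot_square_norm power2_eq_square)
  finally have "g' x \<le> 0"
    unfolding g'_def by (simp add: inner_commute algebra_simps mult_left_mono)
  then have "g t \<le> g 0" using mvt mult_nonpos_nonneg[OF _ t0] by fastforce
  then have "e t \<bullet> e t \<le> 0" using e0 unfolding g_def by (simp add: mult_le_0_iff)
  then show ?thesis by (metis inner_eq_zero_iff inner_ge_zero order_antisym)
qed

definition dominated_on :: "'a set \<Rightarrow> ('a \<Rightarrow> real) \<Rightarrow> ('a \<Rightarrow> 'b::real_normed_vector) \<Rightarrow> bool" where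
  "dominated_on S g f \<longleftrightarrow> (\<exists>c. \<forall>t\<in>S. norm (f t) \<le> c * g t)"

lemma dominated_onI: "(\<And>t. t \<in> S \<Longrightarrow> norm (f t) \<le> g t) \<Longrightarrow> dominated_on S g f"
  unfolding dominated_on_def by (rule exI[of _ 1]) auto

lemma dominated_on_cong: "dominated_on S g f \<Longrightarrow> (\<And>t. t \<in> S \<Longrightarrow> f t = f' t) \<Longrightarrow> dominated_on S g f'"
  unfolding dominated_on_def by auto

lemma dominated_on_add:
  assumes "dominated_on S g f" "dominated_on S g f'"
  shows "dominated_on S g (\<lambda>t. f t + f' t)"
proof -
  obtain c c' where c: "\<forall>t\<in>S. norm (f t) \<le> c * g t" and c': "\<forall>t\<in>S. norm (f' t) \<le> c' * g t"
    using assms unfolding dominated_on_def by blast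
  have "norm (f t + f' t) \<le> (c + c') * g t" if "t \<in> S" for t
    using c c' that norm_triangle_ineq[of "f t" "f' t"] unfolding distrib_right by fastforce
  then show ?thesis unfolding dominated_on_def by blast
qed

lemma dominated_on_minus: "dominated_on S g f \<Longrightarrow> dominated_on S g (\<lambda>t. - f t)"
  unfolding dominated_on_def by simp

lemma dominated_on_diff:
  "dominated_on S g f \<Longrightarrow> dominated_on S g f' \<Longrightarrow> dominated_on S g (\<lambda>t. f t - f' t)"
  using dominated_on_add[of S g f "\<lambda>t. - f' t"] dominated_on_minus[of S g f'] by simp

lemma dominated_on_transpose:
  "dominated_on S g f \<Longrightarrow> dominated_on S g (\<lambda>t. transpose (f t :: real^'m^'n))"
  unfolding dominated_on_def by simp

lemma dominated_on_Pair:
  assumes "dominated_on S g f" "dominated_on S g f'"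
  shows "dominated_on S g (\<lambda>t. (f t, f' t))"
proof -
  obtain c c' where c: "\<forall>t\<in>S. norm (f t) \<le> c * g t" and c': "\<forall>t\<in>S. norm (f' t) \<le> c' * g t"
    using assms unfolding dominated_on_def by blast
  have "norm (f t, f' t) \<le> (c + c') * g t" if "t \<in> S" for t
    using c c' that norm_Pair_le[of "f t" "f' t"] unfolding distrib_right by fastforce
  then show ?thesis unfolding dominated_on_def by blast
qed

lemma dominated_on_matrix_mult_left:
  fixes f :: "real \<Rightarrow> real^'k^'m" and h :: "real \<Rightarrow> real^'n^'k"
  assumes "compact S" "continuous_on S f" "dominated_on S g h"
  shows "dominated_on S g (\<lambda>t. f t ** h t)"
proof -
  obtain M where M: "M \<ge> 0" "\<And>t. t \<in> S \<Longrightarrow> norm (f t) \<le> M"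
    using compact_imp_bounded[OF compact_continuous_image[OF assms(2,1)]]
    unfolding bounded_pos by (meson imageI less_imp_le)
  obtain c where c: "\<forall>t\<in>S. norm (h t) \<le> c * g t"
    using assms(3) unfolding dominated_on_def by blast
  have "norm (f t ** h t) \<le> M * c * g t" if t: "t \<in> S" for t
  proof -
    have "norm (f t ** h t) \<le> norm (f t) * norm (h t)" by (rule norm_matrix_mult_le)
    also have "\<dots> \<le> M * (c * g t)" using M c t by (intro mult_mono) auto
    finally show ?thesis by (simp add: mult.assoc)
  qed
  then show ?thesis unfolding dominated_on_def by blast
qed

lemma dominated_on_matrix_mult_right:
  fixes h :: "real \<Rightarrow> real^'k^'m" and f :: "real \<Rightarrow> real^'n^'k"
  assumes "compact S" "dominated_on S g h" "continuous_on S f"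
  shows "dominated_on S g (\<lambda>t. h t ** f t)"
proof -
  have "dominated_on S g (\<lambda>t. transpose (f t) ** transpose (h t))"
    using assms by (intro dominated_on_matrix_mult_left continuous_on_transpose dominated_on_transpose)
  then have "dominated_on S g (\<lambda>t. transpose (transpose (f t) ** transpose (h t)))"
    by (rule dominated_on_transpose)
  then show ?thesis by (simp add: matrix_transpose_mul)
qed

definition weighted_gram :: "real^'s^'s \<Rightarrow> real^'r^'s \<Rightarrow> real^'r^'r" where
  "weighted_gram P Z = transpose Z ** P ** Z"

text \<open>Right-hand sides of the evolution equations, with \<open>W\<close>, \<open>P\<close> and \<open>A\<close> in the roles of
  the state-space weights, the sample weights and the time derivative of the observations.\<close>

definition basis_rate ::
    "real^'n^'n \<Rightarrow> real^'s^'s \<Rightarrow> real^'s^'n \<Rightarrow> real^'r^'n \<Rightarrow> real^'r^'s \<Rightarrow> real^'r^'r \<Rightarrow> real^'r^'n"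
  where "basis_rate W P A U Y ph =
    (mat 1 - U ** transpose U ** W) ** A ** P ** Y ** matrix_inv (weighted_gram P Y) + U ** ph"

definition coeff_rate ::
    "real^'n^'n \<Rightarrow> real^'s^'n \<Rightarrow> real^'r^'n \<Rightarrow> real^'r^'s \<Rightarrow> real^'r^'r \<Rightarrow> real^'r^'s"
  where "coeff_rate W A U Y ph = transpose A ** W ** U + Y ** ph"

locale reduction_pair =
  fixes W :: "real^'n^'n" and P :: "real^'s^'s" and A :: "real \<Rightarrow> real^'s^'n"
    and U Ut :: "real \<Rightarrow> real^'r^'n" and Y Yt :: "real \<Rightarrow> real^'r^'s"
    and ph pht :: "real \<Rightarrow> real^'r^'r"
  assumes W_sym: "transpose W = W" and P_sym: "transpose P = P"
    and A_cont: "continuous_on {0..} A"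
    and ph_cont: "continuous_on {0..} ph" and pht_cont: "continuous_on {0..} pht"
    and ph_skew: "\<And>t. t \<ge> 0 \<Longrightarrow> skew_symmetric (ph t)"
    and pht_skew: "\<And>t. t \<ge> 0 \<Longrightarrow> skew_symmetric (pht t)"
    and gram_invertible: "\<And>t. t \<ge> 0 \<Longrightarrow> invertible (weighted_gram P (Y t))"
    and gramt_invertible: "\<And>t. t \<ge> 0 \<Longrightarrow> invertible (weighted_gram P (Yt t))"
    and U_ode: "\<And>t. t \<ge> 0 \<Longrightarrow>
      (U has_vector_derivative basis_rate W P (A t) (U t) (Y t) (ph t)) (at t within {0..})"
    and Y_ode: "\<And>t. t \<ge> 0 \<Longrightarrow>
      (Y has_vector_derivative coeff_rate W (A t) (U t) (Y t) (ph t)) (at t within {0..})"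
    and Ut_ode: "\<And>t. t \<ge> 0 \<Longrightarrow>
      (Ut has_vector_derivative basis_rate W P (A t) (Ut t) (Yt t) (pht t)) (at t within {0..})"
    and Yt_ode: "\<And>t. t \<ge> 0 \<Longrightarrow>
      (Yt has_vector_derivative coeff_rate W (A t) (Ut t) (Yt t) (pht t)) (at t within {0..})"
begin

abbreviation "Ct t \<equiv> weighted_gram P (Yt t)"
abbreviation "Cinv t \<equiv> matrix_inv (weighted_gram P (Y t))"
abbreviation "Ctinv t \<equiv> matrix_inv (Ct t)"

definition R :: "real \<Rightarrow> real^'r^'r" where
  "R t = Ctinv t ** transpose (Yt t) ** P ** Y t"

definition "basis_err t = U t - Ut t ** R t"
definition "coeff_err t = Y t - Yt t ** R t"
definition "orth_err t = R t ** transpose (R t) - mat 1"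
definition "err t = (basis_err t, coeff_err t, orth_err t)"

definition R_residual :: "real \<Rightarrow> real^'r^'r" where
  "R_residual t = Ctinv t ** (transpose (Ut t) ** W ** A t ** P ** coeff_err t
    + transpose (Yt t) ** P ** transpose (A t) ** W ** basis_err t)"

definition "R_rate t = R t ** ph t - pht t ** R t + R_residual t"

definition "err_rate t =
  (basis_rate W P (A t) (U t) (Y t) (ph t)
     - (Ut t ** R_rate t + basis_rate W P (A t) (Ut t) (Yt t) (pht t) ** R t),
   coeff_rate W (A t) (U t) (Y t) (ph t)
     - (Yt t ** R_rate t + coeff_rate W (A t) (Ut t) (Yt t) (pht t) ** R t),
   R t ** transpose (R_rate t) + R_rate t ** transpose (R t))"

lemma trajectories_cont:
  "continuous_on {0..} U" "continuous_on {0..} Ut" "continuous_on {0..} Y" "continuous_on {0..} Yt"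
  unfolding continuous_on_eq_continuous_within
  by (auto intro: has_vector_derivative_continuous U_ode Ut_ode Y_ode Yt_ode)

lemma gram_inverse:
  assumes "t \<ge> 0"
  shows "weighted_gram P (Y t) ** Cinv t = mat 1" "Cinv t ** weighted_gram P (Y t) = mat 1"
    "Ct t ** Ctinv t = mat 1" "Ctinv t ** Ct t = mat 1"
  using assms gram_invertible gramt_invertible by (simp_all add: matrix_inv_left matrix_inv_right)

lemma gram_inverses_cont:
  "continuous_on {0..} Cinv" "continuous_on {0..} Ctinv" "continuous_on {0..} Ct"
  using gram_invertible gramt_invertible trajectories_cont
  by (auto simp: weighted_gram_def intro!: continuous_on_matrix_inv continuous_on_matrix_mult
      continuous_on_transpose continuous_on_const)

lemma R_cont: "continuous_on {0..} R"
  unfolding R_def using gram_inverses_cont trajectories_cont by (intro continuous_intros)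

lemma gram_R:
  assumes "t \<ge> 0"
  shows "Ct t ** R t = transpose (Yt t) ** P ** Y t"
proof -
  have "Ct t ** R t = (Ct t ** Ctinv t) ** (transpose (Yt t) ** P ** Y t)"
    by (simp add: R_def matrix_mul_assoc)
  then show ?thesis using gram_inverse(3)[OF assms] by simp
qed

text \<open>The left-hand side is the product-rule derivative of \<open>R\<close>.\<close>
lemma R_rate_identity:
  assumes t: "t \<ge> 0"
  defines "Ytd \<equiv> coeff_rate W (A t) (Ut t) (Yt t) (pht t)"
  shows "- Ctinv t ** (transpose Ytd ** P ** Yt t + transpose (Yt t) ** P ** Ytd) ** Ctinv t
           ** transpose (Yt t) ** P ** Y t
         + Ctinv t ** transpose Ytd ** P ** Y t
         + Ctinv t ** transpose (Yt t) ** P ** coeff_rate W (A t) (U t) (Y t) (ph t)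
       = R_rate t"
proof -
  define G where "G = Ctinv t"
  have G: "transpose (Yt t) ** P ** Yt t ** G = mat 1" "G ** transpose (Yt t) ** P ** Yt t = mat 1"
    using gram_inverse(3,4)[OF t] by (simp_all add: G_def weighted_gram_def matrix_mul_assoc)
  have G': "Z ** transpose (Yt t) ** P ** Yt t ** G = Z" "Z ** G ** transpose (Yt t) ** P ** Yt t = Z"
    for Z :: "real^'r^'r"
    using G by (metis matrix_mul_assoc matrix_mul_rid)+
  show ?thesis
    unfolding G_def[symmetric] Ytd_def coeff_rate_def R_rate_def R_residual_def coeff_err_def
      basis_err_def R_def
    using W_sym P_sym pht_skew[OF t]
    by (simp add: skew_symmetric_def matrix_ring_simps G G' algebra_simps)
qed

lemma R_has_derivative:
  assumes t: "t \<ge> 0"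
  shows "(R has_vector_derivative R_rate t) (at t within {0..})"
proof -
  define Ytd where "Ytd = coeff_rate W (A t) (Ut t) (Yt t) (pht t)"
  define Ctd where "Ctd = transpose Ytd ** P ** Yt t + transpose (Yt t) ** P ** Ytd"
  have "(Ct has_vector_derivative Ctd) (at t within {0..})"
    unfolding weighted_gram_def Ctd_def Ytd_def
    by (rule has_vector_derivative_eq_rhs, (rule has_vector_derivative_matrix_mult
          has_vector_derivative_transpose has_vector_derivative_const Yt_ode[OF t])+)
      (simp add: matrix_ring_simps)
  then have Ctinv_deriv: "(Ctinv has_vector_derivative - Ctinv t ** Ctd ** Ctinv t) (at t within {0..})"
    using gramt_invertible gram_inverses_cont(3) t by (intro has_vector_derivative_matrix_inv) auto
  have "(R has_vector_derivative
      - Ctinv t ** Ctd ** Ctinv t ** transpose (Yt t) ** P ** Y t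
      + Ctinv t ** transpose Ytd ** P ** Y t
      + Ctinv t ** transpose (Yt t) ** P ** coeff_rate W (A t) (U t) (Y t) (ph t)) (at t within {0..})"
    unfolding R_def Ytd_def
    by (rule has_vector_derivative_eq_rhs, (rule has_vector_derivative_matrix_mult
          has_vector_derivative_transpose has_vector_derivative_const Ctinv_deriv
          Y_ode[OF t] Yt_ode[OF t])+)
      (simp add: matrix_ring_simps)
  then show ?thesis
    using R_rate_identity[OF t] unfolding Ctd_def Ytd_def by simp
qed

lemma err_has_derivative:
  assumes t: "t \<ge> 0"
  shows "(err has_vector_derivative err_rate t) (at t within {0..})"
proof -
  have "(orth_err has_vector_derivative R t ** transpose (R_rate t) + R_rate t ** transpose (R t))
      (at t within {0..})"
    unfolding orth_err_def
    by (rule has_vector_derivative_eq_rhs, (rule has_vector_derivative_diff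
          has_vector_derivative_matrix_mult has_vector_derivative_transpose
          has_vector_derivative_const R_has_derivative[OF t])+) simp
  then show ?thesis
    unfolding err_def[abs_def] err_rate_def basis_err_def[abs_def] coeff_err_def[abs_def]
    by (intro has_vector_derivative_Pair has_vector_derivative_diff has_vector_derivative_matrix_mult
        U_ode Ut_ode Y_ode Yt_ode R_has_derivative t)
qed

lemma coeff_fit_expansion:
  assumes t: "t \<ge> 0"
  shows "Y t ** Cinv t - Yt t ** Ctinv t ** R t
    = (coeff_err t - Yt t ** Ctinv t ** orth_err t ** Ct t ** R t
       - Yt t ** Ctinv t ** R t ** transpose (coeff_err t) ** P ** Y t) ** Cinv t"
proof -
  define G Gt where "G = Cinv t" and "Gt = Ctinv t"
  have "Z ** Gt ** Ct t = Z" for Z :: "real^'r^'s"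
    using gram_inverse(4)[OF t] by (metis Gt_def matrix_mul_assoc matrix_mul_rid)
  moreover have "Z ** transpose (Y t) ** P ** Y t ** G = Z" for Z :: "real^'r^'s"
    using gram_inverse(1)[OF t]
    by (metis G_def matrix_mul_assoc matrix_mul_rid weighted_gram_def)
  moreover have "Z ** transpose (Yt t) ** P ** Y t = Z ** Ct t ** R t" for Z :: "real^'r^'s"
    using gram_R[OF t] by (simp add: matrix_mul_assoc[symmetric])
  ultimately show ?thesis
    unfolding G_def[symmetric] Gt_def[symmetric] coeff_err_def orth_err_def
    by (simp add: matrix_ring_simps algebra_simps)
qed

lemma projector_expansion:
  "U t ** transpose (U t) - Ut t ** transpose (Ut t)
    = Ut t ** orth_err t ** transpose (Ut t) + Ut t ** R t ** transpose (basis_err t)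
      + basis_err t ** transpose (U t)"
  by (simp add: orth_err_def basis_err_def matrix_ring_simps algebra_simps)

lemma basis_err_rate_expansion:
  "basis_rate W P (A t) (U t) (Y t) (ph t) - (Ut t ** R_rate t + basis_rate W P (A t) (Ut t) (Yt t) (pht t) ** R t)
    = (mat 1 - U t ** transpose (U t) ** W) ** A t ** P ** (Y t ** Cinv t - Yt t ** Ctinv t ** R t)
      - (U t ** transpose (U t) - Ut t ** transpose (Ut t)) ** W ** A t ** P ** Yt t ** Ctinv t ** R t
      + basis_err t ** ph t - Ut t ** R_residual t"
  by (simp add: basis_rate_def R_rate_def basis_err_def matrix_ring_simps algebra_simps)

lemma coeff_err_rate_expansion:
  "coeff_rate W (A t) (U t) (Y t) (ph t) - (Yt t ** R_rate t + coeff_rate W (A t) (Ut t) (Yt t) (pht t) ** R t)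
    = transpose (A t) ** W ** basis_err t + coeff_err t ** ph t - Yt t ** R_residual t"
  by (simp add: coeff_rate_def R_rate_def basis_err_def coeff_err_def matrix_ring_simps algebra_simps)

lemma orth_err_rate_expansion:
  assumes t: "t \<ge> 0"
  shows "R t ** transpose (R_rate t) + R_rate t ** transpose (R t)
    = - pht t ** orth_err t + orth_err t ** pht t
      + R_residual t ** transpose (R t) + R t ** transpose (R_residual t)"
  using ph_skew[OF t] pht_skew[OF t]
  by (simp add: skew_symmetric_def R_rate_def orth_err_def matrix_ring_simps algebra_simps)

text \<open>Each component of the error rate is a sum of products of an error component with
  continuous factors, so on a compact interval it is dominated by the error.\<close>
lemma err_rate_dominated: "dominated_on {0..a} (\<lambda>t. norm (err t)) err_rate"
proof -
  let ?S = "{0..a} :: real set" and ?e = "\<lambda>t. norm (err t)"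
  have S: "compact ?S" "?S \<subseteq> {0..}" by auto
  note cont = trajectories_cont gram_inverses_cont R_cont A_cont ph_cont pht_cont
  note cont_S = cont[THEN continuous_on_subset, OF S(2)]
  have errs: "dominated_on ?S ?e basis_err" "dominated_on ?S ?e coeff_err" "dominated_on ?S ?e orth_err"
    by (intro dominated_onI, simp add: err_def,
        meson norm_fst_le norm_snd_le order_trans)+
  note rules = dominated_on_add dominated_on_diff dominated_on_minus dominated_on_transpose
    dominated_on_matrix_mult_left[OF S(1)] dominated_on_matrix_mult_right[OF S(1)]
    errs cont_S continuous_on_matrix_mult continuous_on_transpose continuous_on_const
    continuous_on_diff continuous_on_minus
  have res: "dominated_on ?S ?e R_residual"
    unfolding R_residual_def[abs_def] by (fast intro: rules)
  have "dominated_on ?S ?e (\<lambda>t. (mat 1 - U t ** transpose (U t) ** W) ** A t ** P **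
      ((coeff_err t - Yt t ** Ctinv t ** orth_err t ** Ct t ** R t
        - Yt t ** Ctinv t ** R t ** transpose (coeff_err t) ** P ** Y t) ** Cinv t)
    - (Ut t ** orth_err t ** transpose (Ut t) + Ut t ** R t ** transpose (basis_err t)
        + basis_err t ** transpose (U t)) ** W ** A t ** P ** Yt t ** Ctinv t ** R t
    + basis_err t ** ph t - Ut t ** R_residual t)"
    by (fast intro: rules res)
  then have basis: "dominated_on ?S ?e (\<lambda>t. fst (err_rate t))"
    by (rule dominated_on_cong) (simp add: err_rate_def basis_err_rate_expansion
        coeff_fit_expansion projector_expansion)
  have "dominated_on ?S ?e (\<lambda>t. transpose (A t) ** W ** basis_err t + coeff_err t ** ph t
      - Yt t ** R_residual t)"
    by (fast intro: rules res)
  then have coeff: "dominated_on ?S ?e (\<lambda>t. fst (snd (err_rate t)))"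
    by (rule dominated_on_cong) (simp add: err_rate_def coeff_err_rate_expansion)
  have "dominated_on ?S ?e (\<lambda>t. - pht t ** orth_err t + orth_err t ** pht t
      + R_residual t ** transpose (R t) + R t ** transpose (R_residual t))"
    by (fast intro: rules res)
  then have orth: "dominated_on ?S ?e (\<lambda>t. snd (snd (err_rate t)))"
    by (rule dominated_on_cong) (simp add: err_rate_def orth_err_rate_expansion)
  from dominated_on_Pair[OF basis dominated_on_Pair[OF coeff orth]] show ?thesis
    by simp
qed

lemma err_vanishes:
  assumes "err 0 = 0" "t \<ge> 0"
  shows "err t = 0"
proof -
  obtain c where c: "\<forall>s\<in>{0..t}. norm (err_rate s) \<le> c * norm (err s)"
    using err_rate_dominated unfolding dominated_on_def by blast
  show ?thesis
  proof (rule linear_derivative_bound_imp_zero[where a=t])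
    show "(err has_vector_derivative err_rate s) (at s within {0..t})" if "s \<in> {0..t}" for s
      using that by (intro has_vector_derivative_within_subset[OF err_has_derivative]) auto
  qed (use c assms in auto)
qed

lemma R_initial: "Y 0 = Yt 0 ** R0 \<Longrightarrow> R 0 = R0"
  using gram_inverse(4)[of 0] unfolding R_def by (simp add: weighted_gram_def matrix_mul_assoc)

theorem equivalence_preserved:
  assumes R0: "transpose R0 ** R0 = mat 1" and init: "U 0 = Ut 0 ** R0" "Y 0 = Yt 0 ** R0"
    and t: "t \<ge> 0"
  shows "U t = Ut t ** R t" "Y t = Yt t ** R t" "orthogonal_matrix (R t)"
    "(R has_vector_derivative R t ** ph t - pht t ** R t) (at t within {0..})"
proof -
  have "R0 ** transpose R0 = mat 1"
    using R0 matrix_left_right_inverse by blast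
  then have "err 0 = 0"
    using R_initial[OF init(2)] init by (simp add: err_def basis_err_def coeff_err_def orth_err_def
        zero_prod_def)
  then have "err t = 0" using err_vanishes t by blast
  then have errs: "basis_err t = 0" "coeff_err t = 0" "orth_err t = 0"
    by (simp_all add: err_def zero_prod_def)
  then show "U t = Ut t ** R t" "Y t = Yt t ** R t"
    by (simp_all add: basis_err_def coeff_err_def)
  show "orthogonal_matrix (R t)"
    using errs(3) matrix_left_right_inverse by (auto simp: orth_err_def orthogonal_matrix_def)
  have "R_residual t = 0"
    using errs by (simp add: R_residual_def)
  then show "(R has_vector_derivative R t ** ph t - pht t ** R t) (at t within {0..})"
    using R_has_derivative[OF t] by (simp add: R_rate_def)
qed

end

theorem mainTheorem1:
  fixes wx :: "real ^ 'n" and wxi :: "real ^ 's"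
    and T Td :: "real \<Rightarrow> real ^ 's ^ 'n"
    and U Ut :: "real \<Rightarrow> real ^ 'r ^ 'n"
    and Y Yt :: "real \<Rightarrow> real ^ 'r ^ 's"
    and phi phit :: "real \<Rightarrow> real ^ 'r ^ 'r"
    and R0 :: "real ^ 'r ^ 'r"
  defines "Wx \<equiv> diag_mat wx" and "Wxi \<equiv> diag_mat wxi"
  assumes wx_pos: "\<And>i. wx $ i > 0" and wxi_pos: "\<And>i. wxi $ i > 0"
    and T_deriv: "\<And>t. t \<ge> 0 \<Longrightarrow> (T has_vector_derivative Td t) (at t within {0..})"
    and Td_cont: "continuous_on {0..} Td"
    and phi_cont: "continuous_on {0..} phi" and phit_cont: "continuous_on {0..} phit"
    and phi_skew: "\<And>t. t \<ge> 0 \<Longrightarrow> skew_symmetric (phi t)"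
    and phit_skew: "\<And>t. t \<ge> 0 \<Longrightarrow> skew_symmetric (phit t)"
    and C_inv: "\<And>t. t \<ge> 0 \<Longrightarrow> invertible (transpose (Y t) ** Wxi ** Y t)"
    and Ct_inv: "\<And>t. t \<ge> 0 \<Longrightarrow> invertible (transpose (Yt t) ** Wxi ** Yt t)"
    and U_ode: "\<And>t. t \<ge> 0 \<Longrightarrow> (U has_vector_derivative
        ((mat 1 - U t ** transpose (U t) ** Wx) ** Td t ** Wxi ** Y t
           ** matrix_inv (transpose (Y t) ** Wxi ** Y t) + U t ** phi t)) (at t within {0..})"
    and Y_ode: "\<And>t. t \<ge> 0 \<Longrightarrow> (Y has_vector_derivative
        (transpose (Td t) ** Wx ** U t + Y t ** phi t)) (at t within {0..})"
    and Ut_ode: "\<And>t. t \<ge> 0 \<Longrightarrow> (Ut has_vector_derivative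
        ((mat 1 - Ut t ** transpose (Ut t) ** Wx) ** Td t ** Wxi ** Yt t
           ** matrix_inv (transpose (Yt t) ** Wxi ** Yt t) + Ut t ** phit t)) (at t within {0..})"
    and Yt_ode: "\<And>t. t \<ge> 0 \<Longrightarrow> (Yt has_vector_derivative
        (transpose (Td t) ** Wx ** Ut t + Yt t ** phit t)) (at t within {0..})"
    and R0_orth: "transpose R0 ** R0 = mat 1"
    and init: "U 0 = Ut 0 ** R0" "Y 0 = Yt 0 ** R0"
  shows "\<exists>R :: real \<Rightarrow> real ^ 'r ^ 'r. R 0 = R0 \<and>
    (\<forall>t\<ge>0. (R has_vector_derivative (R t ** phi t - phit t ** R t)) (at t within {0..})) \<and>
    (\<forall>t>0. orthogonal_matrix (R t) \<and> U t = Ut t ** R t \<and> Y t = Yt t ** R t)"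
proof -
  interpret reduction_pair Wx Wxi Td U Ut Y Yt phi phit
    using Td_cont phi_cont phit_cont phi_skew phit_skew C_inv Ct_inv U_ode Y_ode Ut_ode Yt_ode
    by unfold_locales (simp_all add: Wx_def Wxi_def weighted_gram_def basis_rate_def coeff_rate_def)
  show ?thesis
    using equivalence_preserved[OF R0_orth init] R_initial[OF init(2)] by (intro exI[of _ R]) auto
qed

end
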